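(* Let $\psi_1\in \mathrm O(\Gamma\oplus U)$ act as the identity on $\Gamma$ and interchange $w$ and $w^*$. Let $$S=\{((P,\omega),B)\in \mathrm{Gr}^{\rm po}_{2,1}(\Gamma_{\mathbb R})\times\Gamma_{\mathbb R} : B\perp P,\ B\perp\omega,\ \omega^2\neq B^2\}.$$ For $((P,\omega),B)\in S$ put $c=\frac{2}{\omega^2-B^2}$. Then $((P,c\omega),cB)\in S$ and $$\psi_1(\gamma((P,\omega),B))=\gamma((P,c\omega),cB).$$
   Context: $\Gamma$ is a lattice of signature $(3,b-3)$. $(w,w^* )$ is a standard basis of the hyperbolic plane $U$ ($w^2={w^*}^2=0$, $\langle w,w^*\rangle=1$). $\mathrm{Gr}^{\rm po}_{2,1}(\Gamma_{\mathbb R})=\{(P,\omega): P$ an oriented positive definite plane in $\Gamma_{\mathbb R}$, $\omega\in P^\perp$, $\omega^2>0\}$. Isometries act on pairs $(H_1,H_2)$ of orthogonal oriented positive planes in $\Gamma_{\mathbb R}\oplus U_{\mathbb R}$ componentwise, transporting orientations. The map $\gamma$ sends $((P,\omega),B)$ to $(H_1,H_2)$ where: - $H_1=\{x-\langle x,B\rangle w: x\in P\}$, oriented via $P$; - $H_2$ has the ordered basis $\big(\tfrac12(\alpha-B^2)w+w^*+B,\ \omega-\langle\omega,B\rangle w\big)$, with $\alpha=\omega^2$. *)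

theory Defs
  imports "HOL-Analysis.Analysis"
begin

text \<open>Gamma_R is modelled as real^'n with the diagonal form of signature (3, b-3),
  b = CARD('n), given by eps (entries +1/-1, exactly three +1).
  Gamma_R (+) U_R is modelled as real^'n x real x real, with w = (0,1,0), w* = (0,0,1).\<close>

definition gform :: "('n::finite \<Rightarrow> real) \<Rightarrow> real^'n \<Rightarrow> real^'n \<Rightarrow> real" where
  "gform eps x y = (\<Sum>i\<in>UNIV. eps i * x$i * y$i)"

definition lform :: "('n::finite \<Rightarrow> real) \<Rightarrow> (real^'n) \<times> real \<times> real \<Rightarrow> (real^'n) \<times> real \<times> real \<Rightarrow> real" where
  "lform eps X Y = gform eps (fst X) (fst Y) + fst (snd X) * snd (snd Y) + snd (snd X) * fst (snd Y)"

definition wvec :: "(real^'n) \<times> real \<times> real" where "wvec = (0, 1, 0)"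
definition wstar :: "(real^'n) \<times> real \<times> real" where "wstar = (0, 0, 1)"
definition emb :: "real^'n \<Rightarrow> (real^'n) \<times> real \<times> real" where "emb x = (x, 0, 0)"

text \<open>The oriented plane with oriented basis (u,v): the set of all positively oriented bases.\<close>
definition oplane :: "'a::real_vector \<Rightarrow> 'a \<Rightarrow> ('a \<times> 'a) set" where
  "oplane u v = {(u', v'). \<exists>a b c d. u' = a *\<^sub>R u + b *\<^sub>R v \<and> v' = c *\<^sub>R u + d *\<^sub>R v \<and> a * d - b * c > 0}"

definition act :: "('a \<Rightarrow> 'b) \<Rightarrow> ('a \<times> 'a) set \<Rightarrow> ('b \<times> 'b) set" where
  "act f H = (\<lambda>(u, v). (f u, f v)) ` H"

definition pos_plane :: "('n::finite \<Rightarrow> real) \<Rightarrow> real^'n \<Rightarrow> real^'n \<Rightarrow> bool" where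
  "pos_plane eps p1 p2 = (\<forall>s t. (s, t) \<noteq> (0, 0) \<longrightarrow>
      gform eps (s *\<^sub>R p1 + t *\<^sub>R p2) (s *\<^sub>R p1 + t *\<^sub>R p2) > 0)"

text \<open>((P,omega)) in Gr^po_{2,1}, with P the oriented plane with oriented basis (p1,p2).\<close>
definition GrPO :: "('n::finite \<Rightarrow> real) \<Rightarrow> real^'n \<Rightarrow> real^'n \<Rightarrow> real^'n \<Rightarrow> bool" where
  "GrPO eps p1 p2 \<omega> = (pos_plane eps p1 p2 \<and> gform eps \<omega> p1 = 0 \<and> gform eps \<omega> p2 = 0
      \<and> gform eps \<omega> \<omega> > 0)"

definition inS :: "('n::finite \<Rightarrow> real) \<Rightarrow> real^'n \<Rightarrow> real^'n \<Rightarrow> real^'n \<Rightarrow> real^'n \<Rightarrow> bool" where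
  "inS eps p1 p2 \<omega> B = (GrPO eps p1 p2 \<omega> \<and> gform eps B p1 = 0 \<and> gform eps B p2 = 0
      \<and> gform eps B \<omega> = 0 \<and> gform eps \<omega> \<omega> \<noteq> gform eps B B)"

definition gamma :: "('n::finite \<Rightarrow> real) \<Rightarrow> real^'n \<Rightarrow> real^'n \<Rightarrow> real^'n \<Rightarrow> real^'n
    \<Rightarrow> (((real^'n) \<times> real \<times> real) \<times> ((real^'n) \<times> real \<times> real)) set
     \<times> (((real^'n) \<times> real \<times> real) \<times> ((real^'n) \<times> real \<times> real)) set" where
  "gamma eps p1 p2 \<omega> B =
    (oplane (emb p1 - gform eps p1 B *\<^sub>R wvec) (emb p2 - gform eps p2 B *\<^sub>R wvec),
     oplane ((1/2 * (gform eps \<omega> \<omega> - gform eps B B)) *\<^sub>R wvec + wstar + emb B)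
            (emb \<omega> - gform eps \<omega> B *\<^sub>R wvec))"

end

theory Submission
  imports Defs
begin

text \<open>When \<open>B\<close> is orthogonal to \<open>P\<close> and to \<open>\<omega>\<close>, the correction terms in \<open>\<gamma>\<close> vanish:
  \<open>H\<^sub>1\<close> is spanned by \<open>P\<close> and \<open>H\<^sub>2\<close> by \<open>(B, (\<omega>\<^sup>2 - B\<^sup>2)/2, 1)\<close> and \<open>\<omega>\<close>.
  The map \<open>\<psi>\<^sub>1\<close> fixes \<open>P\<close> and \<open>\<omega>\<close> and sends the first basis vector of \<open>H\<^sub>2\<close> to
  \<open>(B, 1, (\<omega>\<^sup>2 - B\<^sup>2)/2)\<close>, which is \<open>1/c\<close> times the corresponding vector \<open>(cB, c, 1)\<close>
  for the rescaled data. Rescaling both basis vectors by the same nonzero factor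
  does not change an oriented plane, as the determinant gets multiplied by a square.\<close>

lemma gform_scaleL: "gform eps (c *\<^sub>R x) y = c * gform eps x y"
  unfolding gform_def by (simp add: sum_distrib_left algebra_simps)

lemma gform_scaleR: "gform eps x (c *\<^sub>R y) = c * gform eps x y"
  unfolding gform_def by (simp add: sum_distrib_left algebra_simps)

lemma gform_commute: "gform eps x y = gform eps y x"
  unfolding gform_def by (simp add: algebra_simps)

lemma inS_scaleR:
  assumes "inS eps p1 p2 \<omega> B" and "c \<noteq> 0"
  shows "inS eps p1 p2 (c *\<^sub>R \<omega>) (c *\<^sub>R B)"
proof -
  have "c * c > 0"
    using assms(2) not_real_square_gt_zero by blast
  then have "c * (c * gform eps \<omega> \<omega>) > 0"
    using assms(1) unfolding inS_def GrPO_def by (simp flip: mult.assoc)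
  then show ?thesis
    using assms unfolding inS_def GrPO_def by (simp add: gform_scaleL gform_scaleR)
qed

lemma oplane_scaleR_subset:
  fixes u v :: "'a::real_vector"
  assumes "k \<noteq> 0"
  shows "oplane (k *\<^sub>R u) (k *\<^sub>R v) \<subseteq> oplane u v"
proof clarify
  fix x y assume "(x, y) \<in> oplane (k *\<^sub>R u) (k *\<^sub>R v)"
  then obtain a b c d where det: "a * d - b * c > 0"
    and "x = a *\<^sub>R k *\<^sub>R u + b *\<^sub>R k *\<^sub>R v" "y = c *\<^sub>R k *\<^sub>R u + d *\<^sub>R k *\<^sub>R v"
    unfolding oplane_def by auto
  then have xy: "x = (k * a) *\<^sub>R u + (k * b) *\<^sub>R v" "y = (k * c) *\<^sub>R u + (k * d) *\<^sub>R v"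
    by (simp_all add: mult.commute)
  have "(k * a) * (k * d) - (k * b) * (k * c) = k\<^sup>2 * (a * d - b * c)"
    by (simp add: algebra_simps power2_eq_square)
  also have "\<dots> > 0" using det assms by simp
  finally show "(x, y) \<in> oplane u v"
    unfolding oplane_def using xy by blast
qed

lemma oplane_scaleR:
  fixes u v :: "'a::real_vector"
  assumes "k \<noteq> 0"
  shows "oplane (k *\<^sub>R u) (k *\<^sub>R v) = oplane u v"
proof
  show "oplane (k *\<^sub>R u) (k *\<^sub>R v) \<subseteq> oplane u v"
    using assms by (rule oplane_scaleR_subset)
  have "oplane (inverse k *\<^sub>R k *\<^sub>R u) (inverse k *\<^sub>R k *\<^sub>R v) \<subseteq> oplane (k *\<^sub>R u) (k *\<^sub>R v)"
    using assms by (intro oplane_scaleR_subset) simp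
  then show "oplane u v \<subseteq> oplane (k *\<^sub>R u) (k *\<^sub>R v)"
    using assms by simp
qed

lemma act_oplane:
  assumes "linear f"
  shows "act f (oplane u v) = oplane (f u) (f v)"
proof
  show "act f (oplane u v) \<subseteq> oplane (f u) (f v)"
    unfolding act_def oplane_def using assms
    by (auto simp: linear_add linear_scale) blast
  show "oplane (f u) (f v) \<subseteq> act f (oplane u v)"
  proof clarify
    fix x y assume "(x, y) \<in> oplane (f u) (f v)"
    then obtain a b c d where xy: "x = a *\<^sub>R f u + b *\<^sub>R f v" "y = c *\<^sub>R f u + d *\<^sub>R f v"
      and det: "a * d - b * c > 0"
      unfolding oplane_def by auto
    have "(a *\<^sub>R u + b *\<^sub>R v, c *\<^sub>R u + d *\<^sub>R v) \<in> oplane u v"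
      unfolding oplane_def using det by blast
    moreover have "(x, y) = (f (a *\<^sub>R u + b *\<^sub>R v), f (c *\<^sub>R u + d *\<^sub>R v))"
      using xy assms by (simp add: linear_add linear_scale)
    ultimately show "(x, y) \<in> act f (oplane u v)"
      unfolding act_def by force
  qed
qed

lemma linear_swap_apply:
  fixes psi :: "(real^'n) \<times> real \<times> real \<Rightarrow> (real^'n) \<times> real \<times> real"
  assumes "linear psi" and "\<forall>x. psi (emb x) = emb x"
    and "psi wvec = wstar" and "psi wstar = wvec"
  shows "psi (x, a, b) = (x, b, a)"
proof -
  have "(x, a, b) = emb x + a *\<^sub>R wvec + b *\<^sub>R wstar"
    by (simp add: emb_def wvec_def wstar_def)
  then have "psi (x, a, b) = psi (emb x) + a *\<^sub>R psi wvec + b *\<^sub>R psi wstar"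
    using assms(1) by (simp add: linear_add linear_scale)
  then show ?thesis
    using assms(2-4) by (simp add: emb_def wvec_def wstar_def)
qed

lemma gamma_orth:
  assumes "gform eps B p1 = 0" "gform eps B p2 = 0" "gform eps B \<omega> = 0"
  shows "gamma eps p1 p2 \<omega> B =
    (oplane (p1, 0, 0) (p2, 0, 0),
     oplane (B, (gform eps \<omega> \<omega> - gform eps B B) / 2, 1) (\<omega>, 0, 0))"
proof -
  have "gform eps p1 B = 0" "gform eps p2 B = 0" "gform eps \<omega> B = 0"
    using assms by (simp_all add: gform_commute)
  then show ?thesis
    unfolding gamma_def by (simp add: emb_def wvec_def wstar_def zero_prod_def)
qed

theorem mainTheorem12:
  fixes eps :: "'n::finite \<Rightarrow> real"
    and psi :: "(real^'n) \<times> real \<times> real \<Rightarrow> (real^'n) \<times> real \<times> real"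
    and p1 p2 \<omega> B :: "real^'n"
  assumes sig: "\<forall>i. eps i = 1 \<or> eps i = -1" "card {i. eps i = 1} = 3"
    and psi_lin: "linear psi"
    and psi_isom: "\<forall>X Y. lform eps (psi X) (psi Y) = lform eps X Y"
    and psi_id: "\<forall>x. psi (emb x) = emb x"
    and psi_w: "psi wvec = wstar" and psi_wstar: "psi wstar = wvec"
    and S: "inS eps p1 p2 \<omega> B"
  shows "let c = 2 / (gform eps \<omega> \<omega> - gform eps B B) in
           inS eps p1 p2 (c *\<^sub>R \<omega>) (c *\<^sub>R B) \<and>
           (act psi (fst (gamma eps p1 p2 \<omega> B)), act psi (snd (gamma eps p1 p2 \<omega> B)))
             = gamma eps p1 p2 (c *\<^sub>R \<omega>) (c *\<^sub>R B)"
proof -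
  define d where "d = (gform eps \<omega> \<omega> - gform eps B B) / 2"
  define c where "c = 2 / (gform eps \<omega> \<omega> - gform eps B B)"
  have orth: "gform eps B p1 = 0" "gform eps B p2 = 0" "gform eps B \<omega> = 0"
    and "d \<noteq> 0" using S unfolding inS_def d_def by auto
  then have cd: "c * d = 1" and "c \<noteq> 0"
    unfolding c_def d_def by simp_all
  have swap: "psi (x, a, b) = (x, b, a)" for x a b
    using psi_lin psi_id psi_w psi_wstar by (rule linear_swap_apply)
  have "(gform eps (c *\<^sub>R \<omega>) (c *\<^sub>R \<omega>) - gform eps (c *\<^sub>R B) (c *\<^sub>R B)) / 2 = c * (c * d)"
    unfolding d_def by (simp add: gform_scaleL gform_scaleR algebra_simps)
  also have "\<dots> = c"
    using cd by simp
  finally have "gamma eps p1 p2 (c *\<^sub>R \<omega>) (c *\<^sub>R B) =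
      (oplane (p1, 0, 0) (p2, 0, 0), oplane (c *\<^sub>R (B, 1, d)) (c *\<^sub>R (\<omega>, 0, 0)))"
    using orth cd by (simp add: gamma_orth gform_scaleL gform_scaleR)
  also have "\<dots> = (oplane (p1, 0, 0) (p2, 0, 0), oplane (B, 1, d) (\<omega>, 0, 0))"
    by (simp only: oplane_scaleR[OF \<open>c \<noteq> 0\<close>])
  also have "\<dots> = (act psi (fst (gamma eps p1 p2 \<omega> B)), act psi (snd (gamma eps p1 p2 \<omega> B)))"
    using orth by (simp add: gamma_orth act_oplane[OF psi_lin] swap flip: d_def)
  finally have "(act psi (fst (gamma eps p1 p2 \<omega> B)), act psi (snd (gamma eps p1 p2 \<omega> B)))
      = gamma eps p1 p2 (c *\<^sub>R \<omega>) (c *\<^sub>R B)"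
    by (rule sym)
  with inS_scaleR[OF S \<open>c \<noteq> 0\<close>] show ?thesis
    unfolding Let_def c_def[symmetric] by (rule conjI)
qed

end
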